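(* Let $\mathcal F\subseteq 2^{[n]}$ be a simply rooted family of sets such that $\emptyset\in\mathcal F$. For $0\le k\le n$ let $\mathcal C_k(\mathcal F)=\{[A,B]: A\subseteq B,\ [A,B]\subseteq\mathcal F,\ |B\setminus A|=k\}$. Then $$\sum_{k=0}^n (-1)^k|\mathcal C_k(\mathcal F)|=1.$$
   Context: $[n]=\{1,\dots,n\}$, $2^{[n]}$ its power set, and $[A,B]=\{C\in 2^{[n]}: A\subseteq C\subseteq B\}$; $[i,A]$ means $[\{i\},A]$. A family $\mathcal F\subseteq 2^{[n]}$ is simply rooted if for every non-empty $A\in\mathcal F$ there is $i\in A$ with $[i,A]\subseteq\mathcal F$. *)

theory Defs
  imports Main
begin

definition interval :: "nat set \<Rightarrow> nat set \<Rightarrow> nat set set" where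
  "interval A B = {C. A \<subseteq> C \<and> C \<subseteq> B}"

definition simply_rooted :: "nat set set \<Rightarrow> bool" where
  "simply_rooted F \<longleftrightarrow> (\<forall>A\<in>F. A \<noteq> {} \<longrightarrow> (\<exists>i\<in>A. interval {i} A \<subseteq> F))"

text \<open>An interval with A \<subseteq> B is determined by its endpoints, so we record it as
  the set of intervals (sets of sets).\<close>
definition intervals_k :: "nat set set \<Rightarrow> nat \<Rightarrow> nat set set set" where
  "intervals_k F k = {interval A B | A B. A \<subseteq> B \<and> interval A B \<subseteq> F \<and> card (B - A) = k}"

end

theory Submission
  imports Defs
begin

text \<open>Group the intervals [A,B] \<subseteq> F by their top B. For fixed B the signed count
  \<chi>(B) = \<Sum> (-1)^|B - A| over all admissible bottoms A satisfies, whenever i \<in> B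
  and [i,B] \<subseteq> F, the recursion \<chi>(B) = [B = {i}] - \<chi>(B - {i}): the bottoms
  containing i are all of insert i ` Pow (B - {i}), whose signed count vanishes
  unless B = {i}, and the remaining bottoms are exactly those of B - {i}, each
  with its sign flipped. For a simply rooted family containing the empty set this
  gives \<chi>(B) = [B = {}], so the total alternating count is \<chi>({}) = 1.\<close>

lemma sum_Pow_neg_one_power_card_Diff:
  assumes "finite T"
  shows "(\<Sum>X\<in>Pow T. (-1::int) ^ card (T - X)) = (if T = {} then 1 else 0)"
proof -
  have "(\<Sum>X\<in>Pow T. (-1::int) ^ card (T - X))
      = (\<Sum>X\<in>Pow T. (-1) ^ (card T - card X) * (\<Prod>x\<in>X. 1) * (\<Prod>x\<in>T - X. 1))"
    using assms by (intro sum.cong refl) (auto simp: card_Diff_subset finite_subset)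
  also have "\<dots> = (\<Prod>x\<in>T. (1::int) - 1)"
    by (rule prod_diff_conv_sum'[OF assms, symmetric])
  finally show ?thesis
    using assms by (simp add: power_0_left card_eq_0_iff)
qed

lemma interval_eq_iff:
  assumes "A \<subseteq> B" "A' \<subseteq> B'"
  shows "interval A B = interval A' B' \<longleftrightarrow> A = A' \<and> B = B'"
proof
  assume eq: "interval A B = interval A' B'"
  have "A \<in> interval A' B'" "B \<in> interval A' B'"
    using assms unfolding eq[symmetric] by (auto simp: interval_def)
  moreover have "A' \<in> interval A B" "B' \<in> interval A B"
    using assms unfolding eq by (auto simp: interval_def)
  ultimately show "A = A' \<and> B = B'"
    by (auto simp: interval_def)
qed simp

definition bottoms :: "nat set set \<Rightarrow> nat set \<Rightarrow> nat set set" where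
  "bottoms F B = {A. A \<subseteq> B \<and> interval A B \<subseteq> F}"

definition local_euler_char :: "nat set set \<Rightarrow> nat set \<Rightarrow> int" where
  "local_euler_char F B = (\<Sum>A\<in>bottoms F B. (-1) ^ card (B - A))"

lemma finite_bottoms: "finite B \<Longrightarrow> finite (bottoms F B)"
  by (rule finite_subset[of _ "Pow B"]) (auto simp: bottoms_def)

lemma bottoms_empty_if_notin: "B \<notin> F \<Longrightarrow> bottoms F B = {}"
  by (auto simp: bottoms_def interval_def)

lemma bottoms_empty_set: "{} \<in> F \<Longrightarrow> bottoms F {} = {{}}"
  by (auto simp: bottoms_def interval_def)

lemma bottoms_remove_root:
  assumes "i \<in> B" "interval {i} B \<subseteq> F"
  shows "bottoms F B = insert i ` Pow (B - {i}) \<union> bottoms F (B - {i})"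
proof (intro equalityI subsetI)
  fix A assume A: "A \<in> bottoms F B"
  show "A \<in> insert i ` Pow (B - {i}) \<union> bottoms F (B - {i})"
  proof (cases "i \<in> A")
    case True
    then have "A = insert i (A - {i})" by auto
    moreover have "A - {i} \<in> Pow (B - {i})" using A by (auto simp: bottoms_def)
    ultimately show ?thesis by blast
  next
    case False
    have "interval A (B - {i}) \<subseteq> interval A B" by (auto simp: interval_def)
    then show ?thesis using A False by (auto simp: bottoms_def)
  qed
next
  fix A assume A: "A \<in> insert i ` Pow (B - {i}) \<union> bottoms F (B - {i})"
  show "A \<in> bottoms F B"
  proof (cases "i \<in> A")
    case True
    then have "interval A B \<subseteq> interval {i} B" by (auto simp: interval_def)
    then show ?thesis using A assms by (auto simp: bottoms_def)
  next
    case False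
    then have A': "A \<subseteq> B - {i}" "interval A (B - {i}) \<subseteq> F"
      using A by (auto simp: bottoms_def)
    have "interval A B \<subseteq> interval {i} B \<union> interval A (B - {i})"
      by (auto simp: interval_def)
    then show ?thesis using A' assms by (auto simp: bottoms_def)
  qed
qed

lemma local_euler_char_remove_root:
  assumes "finite B" "i \<in> B" "interval {i} B \<subseteq> F"
  shows "local_euler_char F B = (if B = {i} then 1 else 0) - local_euler_char F (B - {i})"
proof -
  let ?B' = "B - {i}"
  have with_i: "(\<Sum>A\<in>insert i ` Pow ?B'. (-1::int) ^ card (B - A))
      = (\<Sum>X\<in>Pow ?B'. (-1) ^ card (?B' - X))"
  proof -
    have inj: "inj_on (insert i) (Pow ?B')"
      by (rule inj_onI) auto
    show ?thesis
      unfolding sum.reindex[OF inj, unfolded comp_def]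
      by (intro sum.cong refl arg_cong[where f = "\<lambda>S. (-1) ^ card S"]) auto
  qed
  have without_i: "(\<Sum>A\<in>bottoms F ?B'. (-1::int) ^ card (B - A)) = - local_euler_char F ?B'"
    unfolding local_euler_char_def sum_negf[symmetric]
  proof (intro sum.cong refl)
    fix A assume "A \<in> bottoms F ?B'"
    then have "B - A = insert i (?B' - A)" "i \<notin> ?B' - A"
      using assms(2) by (auto simp: bottoms_def)
    then show "(-1::int) ^ card (B - A) = - ((-1) ^ card (?B' - A))"
      using assms(1) by simp
  qed
  have "insert i ` Pow ?B' \<inter> bottoms F ?B' = {}"
    by (auto simp: bottoms_def)
  then have "local_euler_char F B = (\<Sum>A\<in>insert i ` Pow ?B'. (-1) ^ card (B - A))
      + (\<Sum>A\<in>bottoms F ?B'. (-1) ^ card (B - A))"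
    unfolding local_euler_char_def bottoms_remove_root[OF assms(2,3)]
    using assms(1) by (intro sum.union_disjoint) (auto intro: finite_bottoms)
  also have "\<dots> = (if ?B' = {} then 1 else 0) - local_euler_char F ?B'"
    by (simp add: with_i without_i sum_Pow_neg_one_power_card_Diff assms(1))
  finally show ?thesis
    using assms(2) by (auto simp: Diff_eq_empty_iff subset_singleton_iff)
qed

lemma local_euler_char_simply_rooted:
  assumes "finite B" "simply_rooted F" "{} \<in> F"
  shows "local_euler_char F B = (if B = {} then 1 else 0)"
  using assms(1)
proof (induction B rule: finite_remove_induct)
  case empty
  show ?case using assms(3) by (simp add: local_euler_char_def bottoms_empty_set)
next
  case (remove B)
  show ?case
  proof (cases "B \<in> F")
    case False
    then show ?thesis using remove.hyps by (simp add: local_euler_char_def bottoms_empty_if_notin)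
  next
    case True
    then obtain i where "i \<in> B" "interval {i} B \<subseteq> F"
      using assms(2) remove.hyps unfolding simply_rooted_def by blast
    then show ?thesis
      using remove by (simp add: local_euler_char_remove_root Diff_eq_empty_iff subset_singleton_iff)
  qed
qed

lemma intervals_k_eq_image:
  "intervals_k F k = (\<lambda>(B, A). interval A B) ` {(B, A) \<in> Sigma F (bottoms F). card (B - A) = k}"
proof (intro equalityI subsetI)
  fix X assume "X \<in> intervals_k F k"
  then obtain A B where X: "X = interval A B" "A \<subseteq> B" "interval A B \<subseteq> F" "card (B - A) = k"
    unfolding intervals_k_def by blast
  then have "B \<in> F"
    by (auto simp: interval_def)
  with X show "X \<in> (\<lambda>(B, A). interval A B) ` {(B, A) \<in> Sigma F (bottoms F). card (B - A) = k}"
    by (auto simp: bottoms_def)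
qed (auto simp: intervals_k_def bottoms_def)

lemma card_intervals_k:
  "card (intervals_k F k) = card {(B, A) \<in> Sigma F (bottoms F). card (B - A) = k}"
proof -
  have "inj_on (\<lambda>(B, A). interval A B) (Sigma F (bottoms F))"
    by (auto intro!: inj_onI simp: bottoms_def interval_eq_iff)
  then show ?thesis
    unfolding intervals_k_eq_image by (rule card_image[OF inj_on_subset]) auto
qed

lemma alternating_interval_count:
  assumes "finite F" and members: "\<And>B. B \<in> F \<Longrightarrow> finite B \<and> card B \<le> n"
  shows "(\<Sum>k=0..n. (-1::int) ^ k * int (card (intervals_k F k))) = (\<Sum>B\<in>F. local_euler_char F B)"
proof -
  let ?P = "Sigma F (bottoms F)" and ?h = "\<lambda>(B, A). card (B - A)"
  have "finite ?P"
    using assms by (auto intro: finite_bottoms)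
  have "?h ` ?P \<subseteq> {0..n}"
    using members by (force simp: bottoms_def intro: le_trans[OF card_mono])
  have groups: "{(B, A) \<in> ?P. card (B - A) = k} = {p \<in> ?P. ?h p = k}" for k
    by auto
  have "(\<Sum>k=0..n. (-1::int) ^ k * int (card (intervals_k F k)))
      = (\<Sum>k=0..n. \<Sum>p\<in>{p \<in> ?P. ?h p = k}. (-1) ^ ?h p)"
    unfolding card_intervals_k groups by (simp add: mult.commute)
  also have "\<dots> = (\<Sum>p\<in>?P. (-1) ^ ?h p)"
    by (rule sum.group[OF \<open>finite ?P\<close> finite_atLeastAtMost \<open>?h ` ?P \<subseteq> {0..n}\<close>])
  also have "\<dots> = (\<Sum>B\<in>F. local_euler_char F B)"
    unfolding local_euler_char_def using assms
    by (subst sum.Sigma) (auto intro: finite_bottoms simp: split_def)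
  finally show ?thesis .
qed

theorem corollary1:
  fixes n :: nat and F :: "nat set set"
  assumes "F \<subseteq> Pow {1..n}"
    and "simply_rooted F"
    and "{} \<in> F"
  shows "(\<Sum>k=0..n. (-1::int) ^ k * int (card (intervals_k F k))) = 1"
proof -
  have "finite F"
    using assms(1) by (rule finite_subset) simp
  have members: "finite B \<and> card B \<le> n" if "B \<in> F" for B
  proof -
    have "B \<subseteq> {1..n}" using that assms(1) by auto
    then show ?thesis using card_mono[of "{1..n}" B] finite_subset by auto
  qed
  have "(\<Sum>k=0..n. (-1::int) ^ k * int (card (intervals_k F k))) = (\<Sum>B\<in>F. local_euler_char F B)"
    using alternating_interval_count[OF \<open>finite F\<close> members] .
  also have "\<dots> = (\<Sum>B\<in>F. if B = {} then 1 else 0)"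
    using members by (intro sum.cong refl) (simp add: local_euler_char_simply_rooted assms(2,3))
  also have "\<dots> = 1"
    using \<open>finite F\<close> assms(3) by (simp add: sum.delta)
  finally show ?thesis .
qed

end
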